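(* Assume that $f_a(0)=\lim_{u\downarrow0}f_a(u)$ is finite for every $a\in A$. Let $\theta\in\mathbb R^n$ and $p^*\in\mathcal M_1^+(A)$ with $I(p^* )-\sum_j\theta_j\langle p^*,H_j\rangle$ finite. The following are equivalent: (1) $p^*$ satisfies the variational principle with parameters $\theta$; (2) there exist $\alpha\in\mathbb R$ and a subset $A_0\subseteq A$ such that (i) $f_a(p^*_a)=-\alpha-\sum_{j=1}^n\theta_jH_j(a)$ for all $a\in A\setminus A_0$; (ii) $p^*_a=0$ for all $a\in A_0$; (iii) $f_a(0)+\sum_{j=1}^n\theta_jH_j(a)\ge-\alpha$ for all $a\in A_0$.
   Context: Let $A$ be a finite or countable set and $\mathcal M_1^+(A)$ the set of probability distributions $p=(p_a)_{a\in A}$ on $A$. For each $a\in A$ let $h_a:[0,1]\to\mathbb R$ be continuous and strictly concave with $h_a(0)=h_a(1)=0$, differentiable on $(0,1)$ with $h_a'(u)=-f_a(u)$, where $f_a$ extends to a continuous (necessarily strictly increasing) function on $(0,1]$; put $f_a(0)=\lim_{u\downarrow0}f_a(u)\in[-\infty,\infty)$. The generalised entropy is $I(p)=\sum_{a\in A}h_a(p_a)\in[0,+\infty]$. Let $H_1,\dots,H_n:A\to\mathbb R$ be functions bounded from below, and write $\langle p,X\rangle=\sum_{a}p_aX(a)$. A distribution $p^*\in\mathcal M_1^+(A)$ satisfies the variational principle with parameters $\theta=(\theta_1,\dots,\theta_n)\in\mathbb R^n$ if $+\infty> I(p^* )-\sum_{j=1}^n\theta_j\langle p^*,H_j\rangle\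 \ge\ I(p)-\sum_{j=1}^n\theta_j\langle p,H_j\rangle$ for all $p\in\mathcal M_1^+(A)$. *)

theory Defs
  imports "HOL-Analysis.Analysis"
begin

definition strictly_concave_on :: "real set \<Rightarrow> (real \<Rightarrow> real) \<Rightarrow> bool" where
  "strictly_concave_on S g \<longleftrightarrow> convex S \<and>
     (\<forall>x\<in>S. \<forall>y\<in>S. x \<noteq> y \<longrightarrow> (\<forall>t. 0 < t \<and> t < 1 \<longrightarrow>
        g (t * x + (1 - t) * y) > t * g x + (1 - t) * g y))"

definition prob_dists :: "'a set \<Rightarrow> ('a \<Rightarrow> real) set" where
  "prob_dists A = {p. (\<forall>a\<in>A. 0 \<le> p a) \<and> (\<forall>a. a \<notin> A \<longrightarrow> p a = 0) \<and> (p has_sum 1) A}"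

text \<open>Sum over A of a real family with values in [-inf,+inf]; used only for families whose
  negative part is summable, so non-summability means divergence to +infinity.\<close>
definition esum :: "'a set \<Rightarrow> ('a \<Rightarrow> real) \<Rightarrow> ereal" where
  "esum A g = (if g summable_on A then ereal (infsum g A) else \<infinity>)"

text \<open>Generalised entropy I(p) = sum_a h_a(p_a) (terms are nonnegative).\<close>
definition gen_entropy :: "'a set \<Rightarrow> ('a \<Rightarrow> real \<Rightarrow> real) \<Rightarrow> ('a \<Rightarrow> real) \<Rightarrow> ereal" where
  "gen_entropy A h p = esum A (\<lambda>a. h a (p a))"

text \<open>Pairing <p,X> = sum_a p_a X(a) (X bounded below).\<close>
definition pairing :: "'a set \<Rightarrow> ('a \<Rightarrow> real) \<Rightarrow> ('a \<Rightarrow> real) \<Rightarrow> ereal" where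
  "pairing A p X = esum A (\<lambda>a. p a * X a)"

definition vp_terms :: "'a set \<Rightarrow> ('a \<Rightarrow> real \<Rightarrow> real) \<Rightarrow> nat \<Rightarrow> (nat \<Rightarrow> 'a \<Rightarrow> real)
    \<Rightarrow> (nat \<Rightarrow> real) \<Rightarrow> ('a \<Rightarrow> real) \<Rightarrow> ereal set" where
  "vp_terms A h n H \<theta> p = insert (gen_entropy A h p)
      ((\<lambda>j. - (ereal (\<theta> j) * pairing A p (H j))) ` {1..n})"

text \<open>The expression is well defined iff it is not of the form +inf - inf.\<close>
definition vp_defined where
  "vp_defined A h n H \<theta> p \<longleftrightarrow> \<not> (\<infinity> \<in> vp_terms A h n H \<theta> p \<and> - \<infinity> \<in> vp_terms A h n H \<theta> p)"

definition vp_value :: "'a set \<Rightarrow> ('a \<Rightarrow> real \<Rightarrow> real) \<Rightarrow> nat \<Rightarrow> (nat \<Rightarrow> 'a \<Rightarrow> real)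
    \<Rightarrow> (nat \<Rightarrow> real) \<Rightarrow> ('a \<Rightarrow> real) \<Rightarrow> ereal" where
  "vp_value A h n H \<theta> p = gen_entropy A h p - (\<Sum>j\<in>{1..n}. ereal (\<theta> j) * pairing A p (H j))"

definition variational_principle where
  "variational_principle A h n H \<theta> ps \<longleftrightarrow> ps \<in> prob_dists A \<and>
     \<bar>vp_value A h n H \<theta> ps\<bar> \<noteq> \<infinity> \<and>
     (\<forall>p\<in>prob_dists A. vp_defined A h n H \<theta> p \<longrightarrow>
        vp_value A h n H \<theta> p \<le> vp_value A h n H \<theta> ps)"

end

theory Submission
  imports Defs
begin

text \<open>
  Everything rests on one scalar fact: each \<open>h a\<close> is concave on [0,1] with derivative
  \<open>- f a\<close> inside and \<open>f a\<close> continuous on the closed interval, hence satisfies the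
  supergradient inequality \<open>h a y \<le> h a x - f a x * (y - x)\<close> for all \<open>x, y \<in> [0,1]\<close>.
  The objective of a regular distribution (entropy and the relevant pairings summable) is
  the sum over \<open>A\<close> of the density \<open>h a (p a) - energy a * p a\<close>, where
  \<open>energy a = \<Sum>j. \<theta> j * H j a\<close>.

  Sufficiency: the first-order conditions and the supergradient inequality bound the
  density of any competitor pointwise by that of \<open>ps\<close> plus \<open>\<alpha> * (p a - ps a)\<close>, a term
  summing to zero; the lower bounds on the \<open>H j\<close> turn this bound into regularity of the
  competitor (or its value is \<open>-\<infinity>\<close>).
  Necessity: if the marginal objective \<open>f a (ps a) + energy a\<close> at a point of the support
  exceeded its value at some \<open>b\<close>, moving a little mass from \<open>a\<close> to \<open>b\<close> would strictly
  increase the objective.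
\<close>

lemma continuous_on_from_right_limit:
  fixes f :: "real \<Rightarrow> real"
  assumes "continuous_on {0<..1} f" and "(f \<longlongrightarrow> f 0) (at_right 0)"
  shows "continuous_on {0..1} f"
  unfolding continuous_on_def
proof
  fix x :: real assume x: "x \<in> {0..1}"
  show "(f \<longlongrightarrow> f x) (at x within {0..1})"
  proof (cases "x = 0")
    case True
    have "at 0 within {0..1} = at_right (0::real)"
      by (rule at_within_Icc_at_right) simp
    then show ?thesis using assms(2) True by simp
  next
    case False
    then have "x \<in> {0<..1}" using x by simp
    then have "(f \<longlongrightarrow> f x) (at x within {0<..1})"
      using assms(1) by (simp add: continuous_on_def)
    moreover have "at x within {0<..1} = at x within {0..1}"
      using False x by (intro at_within_nhd[of _ "{0<..}"]) auto
    ultimately show ?thesis by simp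
  qed
qed

text \<open>Only plain concavity of the \<open>h a\<close> is needed below.\<close>
lemma concave_on_if_strictly_concave:
  assumes "strictly_concave_on S g"
  shows "concave_on S g"
  unfolding concave_on_iff
proof (intro conjI ballI allI impI)
  show "convex S" using assms by (simp add: strictly_concave_on_def)
  fix x y u v :: real assume xy: "x \<in> S" "y \<in> S" and uv: "0 \<le> u" "0 \<le> v" "u + v = 1"
  show "u * g x + v * g y \<le> g (u *\<^sub>R x + v *\<^sub>R y)"
  proof (cases "x = y \<or> u = 0 \<or> v = 0")
    case True
    then show ?thesis using uv by (auto simp: distrib_right[symmetric])
  next
    case False
    then have "g (u * x + (1 - u) * y) > u * g x + (1 - u) * g y"
      using assms xy uv unfolding strictly_concave_on_def by auto
    then show ?thesis using uv by (simp add: eq_diff_eq[symmetric] add.commute)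
  qed
qed

lemma concave_nonneg_on_unit_interval:
  fixes h :: "real \<Rightarrow> real"
  assumes "concave_on {0..1} h" and "h 0 = 0" "h 1 = 0" and "y \<in> {0..1}"
  shows "0 \<le> h y"
  using concave_onD[OF assms(1), of y 0 1] assms by simp

text \<open>Supergradient inequality, including the endpoints of the interval: at interior points
  it is the tangent inequality for the convex function \<open>- h\<close>; at an arbitrary \<open>x\<close> it follows
  by letting interior points tend to \<open>x\<close>, using continuity of \<open>h\<close> and \<open>f\<close>.\<close>
lemma concave_tangent_inequality:
  fixes h f :: "real \<Rightarrow> real"
  assumes conc: "concave_on {0..1} h" and h_cont: "continuous_on {0..1} h"
    and deriv: "\<forall>u\<in>{0<..<1}. (h has_real_derivative - f u) (at u)"
    and f_cont: "continuous_on {0..1} f"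
    and x: "x \<in> {0..1}" and y: "y \<in> {0..1}"
  shows "h y \<le> h x - f x * (y - x)"
proof -
  have interior: "h y \<le> h c - f c * (y - c)" if c: "c \<in> {0<..<1}" for c
  proof -
    have "(f c) * (y - c) \<le> (- h y) - (- h c)"
    proof (rule convex_on_imp_above_tangent)
      show "convex_on {0..1} (\<lambda>x. - h x)" using conc by (simp add: concave_on_def)
      show "c \<in> interior {0..1}" using c by simp
      have "((\<lambda>x. - h x) has_real_derivative f c) (at c)"
        using DERIV_minus[OF deriv[rule_format, OF c]] by simp
      then show "((\<lambda>x. - h x) has_real_derivative f c) (at c within {0..1})"
        by (rule has_field_derivative_at_within)
    qed (use y in auto)
    then show ?thesis by simp
  qed
  define F where "F = at x within {0<..<1::real}"
  have "x islimpt {0<..<1::real}"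
    using x by (metis atLeastAtMost_iff greaterThanLessThan_subseteq_greaterThanLessThan
        islimpt_greaterThanLessThan1 islimpt_greaterThanLessThan2 islimpt_subset
        less_eq_real_def less_numeral_extra(1))
  then have nontriv: "F \<noteq> bot" by (simp add: F_def trivial_limit_within)
  have inF: "eventually (\<lambda>c. c \<in> {0<..<1}) F"
    unfolding F_def by (simp add: eventually_at_filter)
  then have inF': "eventually (\<lambda>c. c \<in> {0..1}) F"
    by eventually_elim auto
  have ident: "((\<lambda>c. c) \<longlongrightarrow> x) F"
    unfolding F_def by (rule tendsto_ident_at)
  have "((\<lambda>c. h c - f c * (y - c)) \<longlongrightarrow> h x - f x * (y - x)) F"
    by (intro tendsto_diff tendsto_mult tendsto_const ident
        continuous_on_tendsto_compose[OF h_cont ident x inF']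
        continuous_on_tendsto_compose[OF f_cont ident x inF'])
  moreover have "eventually (\<lambda>c. h y \<le> h c - f c * (y - c)) F"
    using inF by eventually_elim (rule interior)
  ultimately show ?thesis
    using tendsto_lowerbound nontriv by blast
qed

lemma has_sum_diff:
  fixes f g :: "'a \<Rightarrow> 'b::topological_ab_group_add"
  assumes "(f has_sum x) A" "(g has_sum y) A"
  shows "((\<lambda>a. f a - g a) has_sum (x - y)) A"
proof -
  have "((\<lambda>a. - g a) has_sum - y) A" using assms(2) by (simp add: has_sum_uminus)
  from has_sum_add[OF assms(1) this] show ?thesis by simp
qed

lemma has_sum_sum:
  fixes F :: "'b \<Rightarrow> 'a \<Rightarrow> 'c::topological_comm_monoid_add"
  assumes "finite J" "\<And>j. j \<in> J \<Longrightarrow> (F j has_sum s j) A"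
  shows "((\<lambda>a. \<Sum>j\<in>J. F j a) has_sum (\<Sum>j\<in>J. s j)) A"
  using assms by (induction J rule: finite_induct) (auto intro: has_sum_add)

lemma has_sum_modify_finite:
  fixes u v :: "'a \<Rightarrow> 'b::topological_ab_group_add"
  assumes "finite F" "F \<subseteq> A" and agree: "\<And>x. x \<in> A - F \<Longrightarrow> v x = u x"
    and u: "(u has_sum s) A"
  shows "(v has_sum (s + (\<Sum>x\<in>F. v x - u x))) A"
proof -
  have "((\<lambda>x. v x - u x) has_sum (\<Sum>x\<in>F. v x - u x)) F"
    using assms(1) by (rule has_sum_finite)
  then have "((\<lambda>x. v x - u x) has_sum (\<Sum>x\<in>F. v x - u x)) A"
    by (rule has_sum_cong_neutral[THEN iffD1, rotated -1]) (use assms(2) agree in auto)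
  from has_sum_add[OF u this] show ?thesis by simp
qed

lemma summable_on_modify_finite:
  fixes u v :: "'a \<Rightarrow> 'b::topological_ab_group_add"
  assumes "finite F" "F \<subseteq> A" "\<And>x. x \<in> A - F \<Longrightarrow> v x = u x" and "u summable_on A"
  shows "v summable_on A"
  using assms has_sum_modify_finite[of F A v u] by (auto simp: summable_on_def)

lemma summable_on_diff:
  fixes f g :: "'a \<Rightarrow> 'b::topological_ab_group_add"
  assumes "f summable_on A" "g summable_on A"
  shows "(\<lambda>a. f a - g a) summable_on A"
  using assms has_sum_diff[where f=f and g=g and A=A] by (auto simp: summable_on_def)

lemma summable_on_sum:
  fixes F :: "'b \<Rightarrow> 'a \<Rightarrow> 'c::topological_comm_monoid_add"
  assumes "finite J" "\<And>j. j \<in> J \<Longrightarrow> F j summable_on A"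
  shows "(\<lambda>a. \<Sum>j\<in>J. F j a) summable_on A"
  using assms by (induction J rule: finite_induct) (auto intro: summable_on_add)

lemma summable_on_dominated_terms:
  fixes g :: "'a \<Rightarrow> real" and k :: "'b \<Rightarrow> 'a \<Rightarrow> real"
  assumes "finite J" and R: "R summable_on A"
    and bound: "\<And>a. a \<in> A \<Longrightarrow> g a + (\<Sum>j\<in>J. k j a) \<le> R a"
    and g_nonneg: "\<And>a. a \<in> A \<Longrightarrow> 0 \<le> g a"
    and k_nonneg: "\<And>j a. j \<in> J \<Longrightarrow> a \<in> A \<Longrightarrow> 0 \<le> k j a"
  shows "g summable_on A" and "j \<in> J \<Longrightarrow> k j summable_on A"
proof -
  have sum_nonneg: "0 \<le> (\<Sum>j\<in>J. k j a)" if "a \<in> A" for a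
    using k_nonneg that by (simp add: sum_nonneg)
  show "g summable_on A"
  proof (rule summable_on_comparison_test[OF R])
    fix a assume "a \<in> A"
    then show "g a \<le> R a" "0 \<le> g a"
      using bound[of a] sum_nonneg[of a] g_nonneg[of a] by linarith+
  qed
  assume j: "j \<in> J"
  have member: "k j a \<le> (\<Sum>j\<in>J. k j a)" if "a \<in> A" for a
    using k_nonneg that j \<open>finite J\<close> by (intro member_le_sum) auto
  then show "k j summable_on A"
  proof (intro summable_on_comparison_test[OF R])
    fix a assume "a \<in> A"
    then show "k j a \<le> R a" "0 \<le> k j a"
      using bound[of a] g_nonneg[of a] k_nonneg[OF j, of a] member[of a] by linarith+
  qed
qed

lemma prob_dists_range:
  assumes "p \<in> prob_dists A" "a \<in> A"
  shows "0 \<le> p a" "p a \<le> 1"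
proof -
  have s: "(p has_sum 1) A" and nn: "\<forall>x\<in>A. 0 \<le> p x"
    using assms(1) by (auto simp: prob_dists_def)
  show "0 \<le> p a" using nn assms(2) by blast
  have "(p has_sum p a) {a}" by (simp add: has_sum_finiteI)
  then show "p a \<le> 1"
    by (rule has_sum_mono_neutral[OF _ s]) (use assms(2) nn in auto)
qed

lemma prob_dists_positive_point:
  assumes "p \<in> prob_dists A"
  obtains a where "a \<in> A" "0 < p a"
proof (rule ccontr)
  assume "\<not> thesis"
  then have "\<forall>a\<in>A. p a = 0"
    using that prob_dists_range(1)[OF assms] by force
  then have "(p has_sum 0) A" by (intro has_sum_0) auto
  moreover have "(p has_sum 1) A" using assms by (simp add: prob_dists_def)
  ultimately show False using has_sum_unique by force
qed

lemma prob_dists_transfer: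
  assumes p: "p \<in> prob_dists A" and ab: "a \<in> A" "b \<in> A" "a \<noteq> b" and t: "0 \<le> t" "t \<le> p a"
  shows "p(a := p a - t, b := p b + t) \<in> prob_dists A"
proof -
  define q where "q = p(a := p a - t, b := p b + t)"
  have "(p has_sum 1) A" using p by (simp add: prob_dists_def)
  then have "(q has_sum (1 + (\<Sum>x\<in>{a, b}. q x - p x))) A"
    by (rule has_sum_modify_finite[rotated -1]) (use ab in \<open>auto simp: q_def\<close>)
  then have "(q has_sum 1) A" using ab by (simp add: q_def)
  moreover have "0 \<le> q x" if "x \<in> A" for x
    using prob_dists_range(1)[OF p that] prob_dists_range(1)[OF p ab(2)] t
    by (auto simp: q_def)
  moreover have "q x = 0" if "x \<notin> A" for x
    using p that ab by (auto simp: q_def prob_dists_def)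
  ultimately show ?thesis by (simp add: prob_dists_def q_def)
qed

definition energy :: "nat \<Rightarrow> (nat \<Rightarrow> 'a \<Rightarrow> real) \<Rightarrow> (nat \<Rightarrow> real) \<Rightarrow> 'a \<Rightarrow> real" where
  "energy n H \<theta> a = (\<Sum>j\<in>{1..n}. \<theta> j * H j a)"

definition vp_density ::
    "('a \<Rightarrow> real \<Rightarrow> real) \<Rightarrow> nat \<Rightarrow> (nat \<Rightarrow> 'a \<Rightarrow> real) \<Rightarrow> (nat \<Rightarrow> real) \<Rightarrow> ('a \<Rightarrow> real) \<Rightarrow> 'a \<Rightarrow> real" where
  "vp_density h n H \<theta> p a = h a (p a) - energy n H \<theta> a * p a"

definition vp_regular ::
    "'a set \<Rightarrow> ('a \<Rightarrow> real \<Rightarrow> real) \<Rightarrow> nat \<Rightarrow> (nat \<Rightarrow> 'a \<Rightarrow> real) \<Rightarrow> (nat \<Rightarrow> real) \<Rightarrow> ('a \<Rightarrow> real) \<Rightarrow> bool" where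
  "vp_regular A h n H \<theta> p \<longleftrightarrow> (\<lambda>a. h a (p a)) summable_on A \<and>
     (\<forall>j\<in>{1..n}. \<theta> j \<noteq> 0 \<longrightarrow> (\<lambda>a. p a * H j a) summable_on A)"

lemma energy_times: "energy n H \<theta> a * q = (\<Sum>j\<in>{1..n}. \<theta> j * (q * H j a))"
  by (simp add: energy_def sum_distrib_left mult_ac)

lemma vp_value_regular:
  assumes reg: "vp_regular A h n H \<theta> p"
  shows "vp_defined A h n H \<theta> p"
    and "vp_density h n H \<theta> p summable_on A"
    and "vp_value A h n H \<theta> p = ereal (infsum (vp_density h n H \<theta> p) A)"
proof -
  have hs: "(\<lambda>a. h a (p a)) summable_on A" using reg by (simp add: vp_regular_def)
  have sj: "(\<lambda>a. p a * H j a) summable_on A" if "j \<in> {1..n}" "\<theta> j \<noteq> 0" for j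
    using reg that by (simp add: vp_regular_def)
  have T: "ereal (\<theta> j) * pairing A p (H j) = ereal (\<theta> j * infsum (\<lambda>a. p a * H j a) A)"
    if "j \<in> {1..n}" for j
    using sj[OF that] by (cases "\<theta> j = 0") (simp_all add: pairing_def esum_def flip: zero_ereal_def)
  have Ts: "((\<lambda>a. \<theta> j * (p a * H j a)) has_sum (\<theta> j * infsum (\<lambda>a. p a * H j a) A)) A"
    if "j \<in> {1..n}" for j
    using sj[OF that] by (cases "\<theta> j = 0") (simp_all add: has_sum_cmult_right)
  define v where "v = infsum (\<lambda>a. h a (p a)) A - (\<Sum>j\<in>{1..n}. \<theta> j * infsum (\<lambda>a. p a * H j a) A)"
  have E: "gen_entropy A h p = ereal (infsum (\<lambda>a. h a (p a)) A)"
    using hs by (simp add: gen_entropy_def esum_def)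
  show "vp_defined A h n H \<theta> p"
    unfolding vp_defined_def vp_terms_def using E T by auto
  have "(vp_density h n H \<theta> p has_sum v) A"
    unfolding vp_density_def[abs_def] energy_times v_def
    by (intro has_sum_diff has_sum_infsum hs has_sum_sum Ts) auto
  then show "vp_density h n H \<theta> p summable_on A"
    and "vp_value A h n H \<theta> p = ereal (infsum (vp_density h n H \<theta> p) A)"
    using T by (simp_all add: has_sum_iff vp_value_def E v_def)
qed

text \<open>A finite objective forces regularity: the entropy cannot be \<open>-\<infinity>\<close>, so both it and every
  pairing term must be finite.\<close>
lemma vp_regular_if_finite:
  assumes fin: "\<bar>vp_value A h n H \<theta> p\<bar> \<noteq> \<infinity>"
  shows "vp_regular A h n H \<theta> p"
proof -
  define E where "E = gen_entropy A h p"
  define S where "S = (\<Sum>j\<in>{1..n}. ereal (\<theta> j) * pairing A p (H j))"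
  have V: "vp_value A h n H \<theta> p = E - S" by (simp add: vp_value_def E_def S_def)
  have "E \<noteq> -\<infinity>" by (simp add: E_def gen_entropy_def esum_def)
  with fin V have "\<bar>E\<bar> \<noteq> \<infinity> \<and> \<bar>S\<bar> \<noteq> \<infinity>" by (cases E; cases S) auto
  then have Ef: "\<bar>E\<bar> \<noteq> \<infinity>" and Sf: "\<forall>j\<in>{1..n}. \<bar>ereal (\<theta> j) * pairing A p (H j)\<bar> \<noteq> \<infinity>"
    unfolding S_def sum_Inf by auto
  show ?thesis
    unfolding vp_regular_def
  proof (intro conjI ballI impI)
    show "(\<lambda>a. h a (p a)) summable_on A"
      using Ef by (auto simp: E_def gen_entropy_def esum_def split: if_splits)
    fix j assume "j \<in> {1..n}" "\<theta> j \<noteq> 0"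
    then show "(\<lambda>a. p a * H j a) summable_on A"
      using Sf by (auto simp: pairing_def esum_def split: if_splits)
  qed
qed

lemma vp_value_minus_infinity:
  assumes j: "j \<in> {1..n}" "\<theta> j > 0" and nsum: "\<not> (\<lambda>a. p a * H j a) summable_on A"
    and def: "vp_defined A h n H \<theta> p"
  shows "vp_value A h n H \<theta> p = -\<infinity>"
proof -
  have Tj: "ereal (\<theta> j) * pairing A p (H j) = \<infinity>"
    using j nsum by (simp add: pairing_def esum_def)
  then have "- \<infinity> \<in> vp_terms A h n H \<theta> p"
    unfolding vp_terms_def using j by force
  with def have "gen_entropy A h p \<noteq> \<infinity>"
    by (auto simp: vp_defined_def vp_terms_def)
  moreover have "gen_entropy A h p \<noteq> -\<infinity>" by (simp add: gen_entropy_def esum_def)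
  moreover have "(\<Sum>j\<in>{1..n}. ereal (\<theta> j) * pairing A p (H j)) = \<infinity>"
    using j Tj by (subst sum_Pinfty) auto
  ultimately show ?thesis
    unfolding vp_value_def by (cases "gen_entropy A h p") auto
qed

text \<open>Splitting the coefficients into positive and negative parts: with \<open>H j \<ge> c j\<close>, the
  terms with negative coefficient become nonnegative, up to a multiple of \<open>p a\<close>.\<close>
lemma vp_density_sign_split:
  "vp_density h n H \<theta> p a = h a (p a)
     + (\<Sum>j\<in>{1..n}. max (- \<theta> j) 0 * ((H j a - c j) * p a))
     - (\<Sum>j\<in>{1..n}. max (\<theta> j) 0 * (p a * H j a))
     + (\<Sum>j\<in>{1..n}. max (- \<theta> j) 0 * c j) * p a"
proof -
  have per_coordinate: "- (\<theta> j * (p a * H j a)) = max (- \<theta> j) 0 * ((H j a - c j) * p a)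
      - max (\<theta> j) 0 * (p a * H j a) + max (- \<theta> j) 0 * c j * p a" for j
    by (simp add: max_def algebra_simps)
  have "vp_density h n H \<theta> p a = h a (p a) + (\<Sum>j\<in>{1..n}. - (\<theta> j * (p a * H j a)))"
    by (simp add: vp_density_def energy_times sum_negf)
  then show ?thesis
    unfolding per_coordinate by (simp add: sum.distrib sum_subtractf sum_distrib_right)
qed

text \<open>This is where the lower
  bounds \<open>c j\<close> of the \<open>H j\<close> enter: given summability of the pairings with positive
  coefficient, the sign split above dominates all remaining nonnegative terms.\<close>
lemma vp_regular_if_dominated:
  assumes p: "p \<in> prob_dists A"
    and h_nonneg: "\<forall>a\<in>A. 0 \<le> h a (p a)"
    and H_bdd: "\<forall>j\<in>{1..n}. bdd_below (H j ` A)"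
    and pos: "\<forall>j\<in>{1..n}. 0 < \<theta> j \<longrightarrow> (\<lambda>a. p a * H j a) summable_on A"
    and dom: "\<forall>a\<in>A. vp_density h n H \<theta> p a \<le> R a" and R: "R summable_on A"
  shows "vp_regular A h n H \<theta> p"
proof -
  have "\<forall>j\<in>{1..n}. \<exists>m. \<forall>a\<in>A. m \<le> H j a"
    using H_bdd by (auto simp: bdd_below_def)
  then obtain c where lower: "\<forall>j\<in>{1..n}. \<forall>a\<in>A. c j \<le> H j a"
    by (auto dest!: bchoice)
  define k where "k j a = max (- \<theta> j) 0 * ((H j a - c j) * p a)" for j a
  define R' where "R' a = R a + (\<Sum>j\<in>{1..n}. max (\<theta> j) 0 * (p a * H j a))
      - (\<Sum>j\<in>{1..n}. max (- \<theta> j) 0 * c j) * p a" for a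
  have p_summable: "p summable_on A"
    using p by (auto simp: prob_dists_def summable_on_def)
  have "(\<lambda>a. max (\<theta> j) 0 * (p a * H j a)) summable_on A" if "j \<in> {1..n}" for j
    using pos that by (cases "0 < \<theta> j") (auto intro: summable_on_cmult_right)
  then have "(\<lambda>a. \<Sum>j\<in>{1..n}. max (\<theta> j) 0 * (p a * H j a)) summable_on A"
    by (intro summable_on_sum) auto
  then have "R' summable_on A"
    unfolding R'_def[abs_def] by (intro summable_on_diff summable_on_add R summable_on_cmult_right p_summable)
  moreover have "h a (p a) + (\<Sum>j\<in>{1..n}. k j a) \<le> R' a" if "a \<in> A" for a
    using dom[rule_format, OF that] vp_density_sign_split[of h n H \<theta> p a c]
    unfolding k_def R'_def by linarith
  moreover have "0 \<le> k j a" if "j \<in> {1..n}" "a \<in> A" for j a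
    using lower that prob_dists_range(1)[OF p] by (auto simp: k_def)
  ultimately have h_summable: "(\<lambda>a. h a (p a)) summable_on A"
    and k_summable: "\<And>j. j \<in> {1..n} \<Longrightarrow> k j summable_on A"
    using summable_on_dominated_terms[of "{1..n}" R' A "\<lambda>a. h a (p a)" k] h_nonneg by auto
  have "(\<lambda>a. p a * H j a) summable_on A" if j: "j \<in> {1..n}" "\<theta> j < 0" for j
  proof -
    have "(\<lambda>a. inverse (- \<theta> j) * k j a + c j * p a) summable_on A"
      using k_summable[OF j(1)] by (intro summable_on_add summable_on_cmult_right p_summable)
    moreover have "inverse (- \<theta> j) * k j a + c j * p a = p a * H j a" for a
      using j(2) by (simp add: k_def field_simps)
    ultimately show ?thesis by simp
  qed
  then show ?thesis
    unfolding vp_regular_def using h_summable pos by (meson linorder_neqE_linordered_idom)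
qed

lemma kkt_density_bound:
  assumes tangent: "\<forall>x\<in>{0..1}. \<forall>y\<in>{0..1}. h a y \<le> h a x - f a x * (y - x)"
    and range: "p a \<in> {0..1}" "ps a \<in> {0..1}"
    and kkt: "f a (ps a) = - \<alpha> - energy n H \<theta> a \<or>
              (ps a = 0 \<and> f a 0 + energy n H \<theta> a \<ge> - \<alpha>)"
  shows "vp_density h n H \<theta> p a \<le> vp_density h n H \<theta> ps a + \<alpha> * (p a - ps a)"
proof -
  have "h a (p a) \<le> h a (ps a) - f a (ps a) * (p a - ps a)"
    using tangent range by blast
  moreover have "- f a (ps a) * (p a - ps a) \<le> (\<alpha> + energy n H \<theta> a) * (p a - ps a)"
    using kkt
  proof
    assume "ps a = 0 \<and> - \<alpha> \<le> f a 0 + energy n H \<theta> a"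
    then show ?thesis using range mult_right_mono[of "- f a 0" _ "p a"] by simp
  qed (simp add: add.commute)
  ultimately show ?thesis by (simp add: vp_density_def algebra_simps)
qed

text \<open>Sufficiency: summing the pointwise bound, the term \<open>\<alpha> * (p a - ps a)\<close> sums to zero.
  Competitors whose value is not \<open>-\<infinity>\<close> are regular by domination.\<close>
lemma kkt_imp_variational_principle:
  assumes tangent: "\<forall>a\<in>A. \<forall>x\<in>{0..1}. \<forall>y\<in>{0..1}. h a y \<le> h a x - f a x * (y - x)"
    and h_nonneg: "\<forall>a\<in>A. \<forall>y\<in>{0..1}. 0 \<le> h a y"
    and H_bdd: "\<forall>j\<in>{1..n}. bdd_below (H j ` A)"
    and ps: "ps \<in> prob_dists A"
    and fin: "\<bar>vp_value A h n H \<theta> ps\<bar> \<noteq> \<infinity>"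
    and stationary: "\<forall>a\<in>A - A0. f a (ps a) = - \<alpha> - (\<Sum>j\<in>{1..n}. \<theta> j * H j a)"
    and boundary: "\<forall>a\<in>A0. ps a = 0"
    and boundary_slope: "\<forall>a\<in>A0. f a 0 + (\<Sum>j\<in>{1..n}. \<theta> j * H j a) \<ge> - \<alpha>"
  shows "variational_principle A h n H \<theta> ps"
proof -
  have reg_ps: "vp_regular A h n H \<theta> ps" using fin by (rule vp_regular_if_finite)
  note value_ps = vp_value_regular[OF reg_ps]
  have pointwise: "vp_density h n H \<theta> p a \<le> vp_density h n H \<theta> ps a + \<alpha> * (p a - ps a)"
    if a: "a \<in> A" and pa: "p a \<in> {0..1}" for p a
  proof (rule kkt_density_bound)
    show "\<forall>x\<in>{0..1}. \<forall>y\<in>{0..1}. h a y \<le> h a x - f a x * (y - x)" using tangent a by blast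
    show "p a \<in> {0..1}" "ps a \<in> {0..1}" using pa prob_dists_range[OF ps a] by auto
    show "f a (ps a) = - \<alpha> - energy n H \<theta> a \<or> (ps a = 0 \<and> f a 0 + energy n H \<theta> a \<ge> - \<alpha>)"
      using stationary boundary boundary_slope a by (cases "a \<in> A0") (auto simp: energy_def)
  qed
  show ?thesis
    unfolding variational_principle_def
  proof (intro conjI ps fin ballI impI)
    fix p assume p: "p \<in> prob_dists A" and def: "vp_defined A h n H \<theta> p"
    show "vp_value A h n H \<theta> p \<le> vp_value A h n H \<theta> ps"
    proof (cases "\<exists>j\<in>{1..n}. 0 < \<theta> j \<and> \<not> (\<lambda>a. p a * H j a) summable_on A")
      case True
      then show ?thesis using vp_value_minus_infinity def by fastforce
    next
      case False
      define R where "R a = vp_density h n H \<theta> ps a + \<alpha> * (p a - ps a)" for a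
      have "(R has_sum (infsum (vp_density h n H \<theta> ps) A + \<alpha> * (1 - 1))) A"
        using p ps value_ps(2) unfolding R_def[abs_def] prob_dists_def
        by (intro has_sum_add has_sum_cmult_right has_sum_diff has_sum_infsum) auto
      moreover have "vp_regular A h n H \<theta> p"
      proof (rule vp_regular_if_dominated[OF p _ H_bdd _ _ has_sum_imp_summable[OF calculation]])
        show "\<forall>a\<in>A. 0 \<le> h a (p a)" using h_nonneg prob_dists_range[OF p] by auto
        show "\<forall>j\<in>{1..n}. 0 < \<theta> j \<longrightarrow> (\<lambda>a. p a * H j a) summable_on A" using False by auto
        show "\<forall>a\<in>A. vp_density h n H \<theta> p a \<le> R a"
          using pointwise prob_dists_range[OF p] by (auto simp: R_def)
      qed
      note value_p = vp_value_regular[OF this]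
      ultimately have "infsum (vp_density h n H \<theta> p) A \<le> infsum (vp_density h n H \<theta> ps) A + \<alpha> * (1 - 1)"
        by (intro has_sum_mono[OF has_sum_infsum[OF value_p(2)]])
          (use pointwise prob_dists_range[OF p] in \<open>auto simp: R_def\<close>)
      then show ?thesis by (simp add: value_p(3) value_ps(3))
    qed
  qed
qed

lemma vp_transfer:
  assumes ps: "ps \<in> prob_dists A" and reg: "vp_regular A h n H \<theta> ps"
    and ab: "a \<in> A" "b \<in> A" "a \<noteq> b" and t: "0 \<le> t" "t \<le> ps a"
    and p_def: "p = ps(a := ps a - t, b := ps b + t)"
  shows "p \<in> prob_dists A" and "vp_regular A h n H \<theta> p"
    and "infsum (vp_density h n H \<theta> p) A = infsum (vp_density h n H \<theta> ps) A
          + (vp_density h n H \<theta> p a - vp_density h n H \<theta> ps a)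
          + (vp_density h n H \<theta> p b - vp_density h n H \<theta> ps b)"
proof -
  show "p \<in> prob_dists A" unfolding p_def using prob_dists_transfer[OF ps ab t] .
  have agree: "p x = ps x" if "x \<in> A - {a, b}" for x using that by (simp add: p_def)
  have fin: "finite {a, b}" "{a, b} \<subseteq> A" using ab by auto
  show "vp_regular A h n H \<theta> p"
    unfolding vp_regular_def
  proof (intro conjI ballI impI)
    have "(\<lambda>x. h x (ps x)) summable_on A" using reg by (simp add: vp_regular_def)
    then show "(\<lambda>x. h x (p x)) summable_on A"
      by (rule summable_on_modify_finite[OF fin, rotated]) (simp add: agree)
    fix j assume "j \<in> {1..n}" "\<theta> j \<noteq> 0"
    then have "(\<lambda>x. ps x * H j x) summable_on A" using reg by (simp add: vp_regular_def)
    then show "(\<lambda>x. p x * H j x) summable_on A"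
      by (rule summable_on_modify_finite[OF fin, rotated]) (simp add: agree)
  qed
  have "(vp_density h n H \<theta> p has_sum (infsum (vp_density h n H \<theta> ps) A
      + (\<Sum>x\<in>{a, b}. vp_density h n H \<theta> p x - vp_density h n H \<theta> ps x))) A"
    using vp_value_regular(2)[OF reg, THEN has_sum_infsum]
    by (rule has_sum_modify_finite[OF fin, rotated]) (simp add: vp_density_def agree)
  then show "infsum (vp_density h n H \<theta> p) A = infsum (vp_density h n H \<theta> ps) A
          + (vp_density h n H \<theta> p a - vp_density h n H \<theta> ps a)
          + (vp_density h n H \<theta> p b - vp_density h n H \<theta> ps b)"
    using ab by (simp add: has_sum_iff)
qed

lemma small_transfer_keeps_order:
  fixes g k :: "real \<Rightarrow> real"
  assumes g: "continuous_on {0..1} g" and k: "continuous_on {0..1} k"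
    and xy: "0 < x" "0 \<le> y" "x + y \<le> 1" and less: "k y < g x"
  obtains t where "0 < t" "t \<le> x" "k (y + t) < g (x - t)"
proof -
  have small: "\<forall>\<^sub>F t in at_right 0. 0 < t \<and> t \<le> x"
    using xy by (auto simp: eventually_at_right_field intro!: exI[of _ x])
  then have "\<forall>\<^sub>F t in at_right 0. x - t \<in> {0..1}" "\<forall>\<^sub>F t in at_right 0. y + t \<in> {0..1}"
    using xy by (auto elim!: eventually_mono)
  moreover have "((\<lambda>t. x - t) \<longlongrightarrow> x) (at_right 0)" "((\<lambda>t. y + t) \<longlongrightarrow> y) (at_right 0)"
    by (auto intro!: tendsto_eq_intros)
  moreover have "x \<in> {0..1}" "y \<in> {0..1}" using xy by auto
  ultimately have "((\<lambda>t. g (x - t)) \<longlongrightarrow> g x) (at_right 0)"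
    and "((\<lambda>t. k (y + t)) \<longlongrightarrow> k y) (at_right 0)"
    using continuous_on_tendsto_compose[OF g] continuous_on_tendsto_compose[OF k] by blast+
  then have "((\<lambda>t. g (x - t) - k (y + t)) \<longlongrightarrow> g x - k y) (at_right 0)"
    by (rule tendsto_diff)
  moreover have "0 < g x - k y" using less by simp
  ultimately have "\<forall>\<^sub>F t in at_right 0. 0 < g (x - t) - k (y + t)"
    by (rule order_tendstoD(1))
  with small have "\<forall>\<^sub>F t in at_right 0. 0 < g (x - t) - k (y + t) \<and> 0 < t \<and> t \<le> x"
    by eventually_elim auto
  then show ?thesis
    using that eventually_happens'[OF trivial_limit_at_right_real] by force
qed

text \<open>Lower bound for the gain of a transfer of mass \<open>t\<close> from \<open>a\<close> to \<open>b\<close>, from the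
  supergradient inequality taken at the perturbed points.\<close>
lemma vp_transfer_gain:
  assumes tangent_a: "\<forall>x\<in>{0..1}. \<forall>y\<in>{0..1}. h a y \<le> h a x - f a x * (y - x)"
    and tangent_b: "\<forall>x\<in>{0..1}. \<forall>y\<in>{0..1}. h b y \<le> h b x - f b x * (y - x)"
    and range: "ps a \<in> {0..1}" "ps b \<in> {0..1}" "ps a - t \<in> {0..1}" "ps b + t \<in> {0..1}"
    and "a \<noteq> b" and p_def: "p = ps(a := ps a - t, b := ps b + t)"
  shows "t * ((f a (ps a - t) + energy n H \<theta> a) - (f b (ps b + t) + energy n H \<theta> b))
    \<le> (vp_density h n H \<theta> p a - vp_density h n H \<theta> ps a)
      + (vp_density h n H \<theta> p b - vp_density h n H \<theta> ps b)"
proof -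
  have "h a (ps a) \<le> h a (ps a - t) - f a (ps a - t) * (ps a - (ps a - t))"
    using tangent_a range by blast
  moreover have "h b (ps b) \<le> h b (ps b + t) - f b (ps b + t) * (ps b - (ps b + t))"
    using tangent_b range by blast
  moreover have pa: "p a = ps a - t" and pb: "p b = ps b + t" using \<open>a \<noteq> b\<close> by (auto simp: p_def)
  ultimately show ?thesis unfolding vp_density_def pa pb by (simp add: algebra_simps)
qed

text \<open>The marginal objective \<open>f a (ps a) + energy a\<close> at a point carrying mass is no larger
  than at any other point: otherwise a small transfer of mass would increase the objective.\<close>
lemma vp_marginal_minimal:
  assumes tangent: "\<forall>a\<in>A. \<forall>x\<in>{0..1}. \<forall>y\<in>{0..1}. h a y \<le> h a x - f a x * (y - x)"
    and f_cont: "\<forall>a\<in>A. continuous_on {0..1} (f a)"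
    and VP: "variational_principle A h n H \<theta> ps"
    and ab: "a \<in> A" "b \<in> A" and pos: "0 < ps a"
  shows "f a (ps a) + energy n H \<theta> a \<le> f b (ps b) + energy n H \<theta> b"
proof (rule ccontr)
  let ?E = "energy n H \<theta>"
  assume "\<not> ?thesis"
  then have less: "f b (ps b) + (?E b - ?E a) < f a (ps a)" by simp
  then have "a \<noteq> b" by auto
  have ps: "ps \<in> prob_dists A" and fin: "\<bar>vp_value A h n H \<theta> ps\<bar> \<noteq> \<infinity>"
    using VP by (auto simp: variational_principle_def)
  have reg: "vp_regular A h n H \<theta> ps" using fin by (rule vp_regular_if_finite)
  have "ps(a := ps a - ps a, b := ps b + ps a) \<in> prob_dists A"
    using prob_dists_transfer[OF ps ab \<open>a \<noteq> b\<close>, of "ps a"] pos by linarith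
  then have total: "ps a + ps b \<le> 1" using prob_dists_range(2)[OF _ ab(2)] \<open>a \<noteq> b\<close> by fastforce
  have "0 \<le> ps b" using prob_dists_range[OF ps ab(2)] by simp
  have "continuous_on {0..1} (\<lambda>y. f b y + (?E b - ?E a))"
    using f_cont ab by (auto intro: continuous_on_add continuous_on_const)
  then obtain t where t: "0 < t" "t \<le> ps a"
    and slope: "f b (ps b + t) + (?E b - ?E a) < f a (ps a - t)"
    by (rule small_transfer_keeps_order[where k="\<lambda>y. f b y + (?E b - ?E a)",
          OF f_cont[rule_format, OF ab(1)] _ pos \<open>0 \<le> ps b\<close> total less])
  define p where "p = ps(a := ps a - t, b := ps b + t)"
  note transfer = vp_transfer[OF ps reg ab \<open>a \<noteq> b\<close> less_imp_le[OF t(1)] t(2) p_def]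
  have ps_range: "ps a \<in> {0..1}" "ps b \<in> {0..1}" using prob_dists_range[OF ps] ab by auto
  have moved_range: "ps a - t \<in> {0..1}" "ps b + t \<in> {0..1}"
    using prob_dists_range[OF transfer(1) ab(1)] prob_dists_range[OF transfer(1) ab(2)] \<open>a \<noteq> b\<close>
    by (auto simp: p_def)
  have "0 < t * ((f a (ps a - t) + ?E a) - (f b (ps b + t) + ?E b))"
    using t slope by simp
  also have "\<dots> \<le> (vp_density h n H \<theta> p a - vp_density h n H \<theta> ps a)
      + (vp_density h n H \<theta> p b - vp_density h n H \<theta> ps b)"
    by (rule vp_transfer_gain[OF bspec[OF tangent ab(1)] bspec[OF tangent ab(2)]
          ps_range moved_range \<open>a \<noteq> b\<close> p_def])
  finally have "vp_value A h n H \<theta> ps < vp_value A h n H \<theta> p"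
    using transfer(3) by (simp add: vp_value_regular(3)[OF reg] vp_value_regular(3)[OF transfer(2)])
  moreover have "vp_value A h n H \<theta> p \<le> vp_value A h n H \<theta> ps"
    using VP transfer(1) vp_value_regular(1)[OF transfer(2)] by (simp add: variational_principle_def)
  ultimately show False by simp
qed

lemma variational_principle_imp_kkt:
  assumes tangent: "\<forall>a\<in>A. \<forall>x\<in>{0..1}. \<forall>y\<in>{0..1}. h a y \<le> h a x - f a x * (y - x)"
    and f_cont: "\<forall>a\<in>A. continuous_on {0..1} (f a)"
    and VP: "variational_principle A h n H \<theta> ps"
  shows "\<exists>\<alpha>::real. \<exists>A0. A0 \<subseteq> A \<and>
       (\<forall>a\<in>A - A0. f a (ps a) = - \<alpha> - (\<Sum>j\<in>{1..n}. \<theta> j * H j a)) \<and>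
       (\<forall>a\<in>A0. ps a = 0) \<and>
       (\<forall>a\<in>A0. f a 0 + (\<Sum>j\<in>{1..n}. \<theta> j * H j a) \<ge> - \<alpha>)"
proof -
  let ?g = "\<lambda>a. f a (ps a) + energy n H \<theta> a"
  note minimal = vp_marginal_minimal[OF tangent f_cont VP]
  have ps: "ps \<in> prob_dists A" using VP by (simp add: variational_principle_def)
  obtain a0 where a0: "a0 \<in> A" "0 < ps a0" using prob_dists_positive_point[OF ps] by blast
  have "f a (ps a) = - (- ?g a0) - (\<Sum>j\<in>{1..n}. \<theta> j * H j a)"
    if "a \<in> A - {a\<in>A. ps a = 0}" for a
  proof -
    have "a \<in> A" "0 < ps a" using that prob_dists_range(1)[OF ps] by force+
    then have "?g a = ?g a0" using minimal a0 by (meson order_antisym)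
    then show ?thesis by (simp add: energy_def)
  qed
  moreover have "f a 0 + (\<Sum>j\<in>{1..n}. \<theta> j * H j a) \<ge> - (- ?g a0)"
    if "a \<in> {a\<in>A. ps a = 0}" for a
  proof -
    have "?g a0 \<le> ?g a" using minimal[OF a0(1) _ a0(2)] that by blast
    then show ?thesis using that by (simp add: energy_def)
  qed
  ultimately show ?thesis by blast
qed

theorem theorem2:
  fixes A :: "'a set" and h f :: "'a \<Rightarrow> real \<Rightarrow> real" and n :: nat
    and H :: "nat \<Rightarrow> 'a \<Rightarrow> real" and \<theta> :: "nat \<Rightarrow> real" and ps :: "'a \<Rightarrow> real"
  assumes countA: "countable A"
    and h_cont: "\<forall>a\<in>A. continuous_on {0..1} (h a)"
    and h_conc: "\<forall>a\<in>A. strictly_concave_on {0..1} (h a)"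
    and h_ends: "\<forall>a\<in>A. h a 0 = 0 \<and> h a 1 = 0"
    and h_deriv: "\<forall>a\<in>A. \<forall>u\<in>{0<..<1}. (h a has_real_derivative - f a u) (at u)"
    and f_cont: "\<forall>a\<in>A. continuous_on {0<..1} (f a)"
    and f_zero: "\<forall>a\<in>A. (f a \<longlongrightarrow> f a 0) (at_right 0)"
    and H_bdd: "\<forall>j\<in>{1..n}. bdd_below (H j ` A)"
    and ps: "ps \<in> prob_dists A"
    and fin: "\<bar>vp_value A h n H \<theta> ps\<bar> \<noteq> \<infinity>"
  shows "variational_principle A h n H \<theta> ps \<longleftrightarrow>
    (\<exists>\<alpha>::real. \<exists>A0. A0 \<subseteq> A \<and>
       (\<forall>a\<in>A - A0. f a (ps a) = - \<alpha> - (\<Sum>j\<in>{1..n}. \<theta> j * H j a)) \<and>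
       (\<forall>a\<in>A0. ps a = 0) \<and>
       (\<forall>a\<in>A0. f a 0 + (\<Sum>j\<in>{1..n}. \<theta> j * H j a) \<ge> - \<alpha>))"
proof -
  have concave: "\<forall>a\<in>A. concave_on {0..1} (h a)"
    using h_conc by (simp add: concave_on_if_strictly_concave)
  have f_cont': "\<forall>a\<in>A. continuous_on {0..1} (f a)"
    using f_cont f_zero by (simp add: continuous_on_from_right_limit)
  have tangent: "\<forall>a\<in>A. \<forall>x\<in>{0..1}. \<forall>y\<in>{0..1}. h a y \<le> h a x - f a x * (y - x)"
    using concave h_cont h_deriv f_cont' by (blast intro: concave_tangent_inequality)
  have h_nonneg: "\<forall>a\<in>A. \<forall>y\<in>{0..1}. 0 \<le> h a y"
    using concave h_ends by (blast intro: concave_nonneg_on_unit_interval)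
  show ?thesis
    using variational_principle_imp_kkt[OF tangent f_cont']
      kkt_imp_variational_principle[OF tangent h_nonneg H_bdd ps fin]
    by blast
qed

end
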